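(* Let $A=(S,f_c,f_d)$ be a self-similar cellular automaton and suppose $q\in S$ satisfies $f_c(x,q,z)=f_d(x,q,z)=q$ for all $x,z\in S$. Let $c:\mathbb{Z}\to S$ be an initial configuration with $c(j)=q$ for some $j\in\mathbb{Z}$. Then every evolution $s$ of $A$ from $c$ satisfies $s(j,k)=q$ for all $k\ge 0$, and for every $i<j$ and every $k\ge0$ the value $s(i,k)$ is the same for all evolutions $s$ of $A$ from $c$.
   Context: A self-similar cellular automaton is a triple $A=(S,f_c,f_d)$ with $S$ a finite set of states and $f_c,f_d:S^3\to S$. Cells are indexed by $j\in\mathbb{Z}$; cell $j$ has cycles $[k/2^j,(k+1)/2^j)$, and the $k$-th cycle of cell $j$ is identified with the pair $(j,k)$. The automaton is started at time $0$; the set of cycles is $C=\{(i,k): i\in\mathbb{Z},\ k\in\mathbb{Z}_{\ge 0}\}$. Given an initial configuration $c:\mathbb{Z}\to S$, an evolution of $A$ from $c$ is a map $s:C\to S$ with $s(i,0)=c(i)$ for all $i$ and, for all $(i,k)$ with $k\ge1$, $s(i,k)=f_c\big(s(i-1,\lfloor (k-1)/2\rfloor),s(i,k-1),s(i+1,2k-1)\big)$ if $k$ is even and $s(i,k)=f_d(\text{same arguments})$ if $k$ is odd. *)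

theory Defs
  imports Main
begin

definition ssca :: "'a set \<Rightarrow> ('a \<Rightarrow> 'a \<Rightarrow> 'a \<Rightarrow> 'a) \<Rightarrow> ('a \<Rightarrow> 'a \<Rightarrow> 'a \<Rightarrow> 'a) \<Rightarrow> bool" where
  "ssca S fc fd \<longleftrightarrow> finite S \<and>
     (\<forall>x\<in>S. \<forall>y\<in>S. \<forall>z\<in>S. fc x y z \<in> S \<and> fd x y z \<in> S)"

text \<open>An evolution s : C -> S from the initial configuration c, where the cycle
  (i,k) means the k-th cycle of cell i (i integer, k natural).\<close>
definition evolution :: "'a set \<Rightarrow> ('a \<Rightarrow> 'a \<Rightarrow> 'a \<Rightarrow> 'a) \<Rightarrow> ('a \<Rightarrow> 'a \<Rightarrow> 'a \<Rightarrow> 'a)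
    \<Rightarrow> (int \<Rightarrow> 'a) \<Rightarrow> (int \<Rightarrow> nat \<Rightarrow> 'a) \<Rightarrow> bool" where
  "evolution S fc fd c s \<longleftrightarrow>
     (\<forall>i k. s i k \<in> S) \<and>
     (\<forall>i. s i 0 = c i) \<and>
     (\<forall>i k. k \<ge> 1 \<longrightarrow>
        s i k = (if even k then fc else fd)
                  (s (i - 1) ((k - 1) div 2)) (s i (k - 1)) (s (i + 1) (2 * k - 1)))"

end

theory Submission
  imports Defs
begin

(* Measure the starting time k/2^i of the cycle (i,k) in units of the
   cycles of cell j, i.e. by the natural number  k * 2^(j-i)  for i <= j.  For k >= 1
   the update of (i,k) reads the cycles (i-1,(k-1) div 2), (i,k-1) and (i+1,2k-1),
   all of which start strictly earlier.
   (1) If q is absorbing (fc x q z = fd x q z = q), a cell that starts in q stays in q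
       forever: induction on k.
   (2) Two evolutions from the same initial configuration that agree on cell j agree
       on every cell i < j: well-founded induction on the starting time of (i,k).  The
       left and middle arguments stay to the left of j; the right argument is either
       on cell j itself, where the evolutions agree by hypothesis, or again left of j.
   The theorem follows: by (1) every evolution has cell j constantly equal to q, so
   any two of them agree on cell j, and (2) applies. *)

lemma evolution_in:
  assumes "evolution S fc fd c s"
  shows "s i k \<in> S"
  using assms unfolding evolution_def by blast

lemma evolution_init:
  assumes "evolution S fc fd c s"
  shows "s i 0 = c i"
  using assms unfolding evolution_def by blast

lemma evolution_step:
  assumes "evolution S fc fd c s" and "k \<ge> 1"
  shows "s i k = (if even k then fc else fd)
                  (s (i - 1) ((k - 1) div 2)) (s i (k - 1)) (s (i + 1) (2 * k - 1))"
  using assms unfolding evolution_def by blast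

lemma absorbing_cell_constant:
  assumes evo: "evolution S fc fd c s"
    and absorbing: "\<forall>x\<in>S. \<forall>z\<in>S. fc x q z = q \<and> fd x q z = q"
    and init: "c j = q"
  shows "s j k = q"
proof (induction k)
  case 0
  then show ?case using evolution_init[OF evo] init by simp
next
  case (Suc k)
  have "s j (Suc k) = (if even (Suc k) then fc else fd)
          (s (j - 1) (k div 2)) (s j k) (s (j + 1) (2 * Suc k - 1))"
    using evolution_step[OF evo, of "Suc k" j] by simp
  then show ?case
    using Suc evolution_in[OF evo] absorbing by simp
qed

text \<open>Starting time of the cycle (i,k), in units of the cycles of cell j (for i \<le> j).\<close>

definition start_time :: "int \<Rightarrow> int \<Rightarrow> nat \<Rightarrow> nat" where
  "start_time j i k = k * 2 ^ nat (j - i)"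

lemma start_time_left_earlier:
  assumes "i < j" and "k \<ge> 1"
  shows "start_time j (i - 1) ((k - 1) div 2) < start_time j i k"
proof -
  have shift: "nat (j - (i - 1)) = Suc (nat (j - i))"
    using assms(1) by simp
  have "start_time j (i - 1) ((k - 1) div 2) = ((k - 1) div 2 * 2) * 2 ^ nat (j - i)"
    unfolding start_time_def shift by simp
  also have "\<dots> \<le> (k - 1) * 2 ^ nat (j - i)"
    by (intro mult_right_mono) auto
  also have "\<dots> < start_time j i k"
    using assms(2) by (simp add: start_time_def)
  finally show ?thesis .
qed

lemma start_time_self_earlier:
  assumes "k \<ge> 1"
  shows "start_time j i (k - 1) < start_time j i k"
  using assms by (simp add: start_time_def)

lemma start_time_right_earlier:
  assumes "i + 1 < j" and "k \<ge> 1"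
  shows "start_time j (i + 1) (2 * k - 1) < start_time j i k"
proof -
  have shift: "nat (j - i) = Suc (nat (j - (i + 1)))"
    using assms(1) by simp
  have "start_time j (i + 1) (2 * k - 1) < (2 * k) * 2 ^ nat (j - (i + 1))"
    using assms(2) by (simp add: start_time_def)
  also have "\<dots> = start_time j i k"
    unfolding start_time_def shift by simp
  finally show ?thesis .
qed

text \<open>Information only flows to the left of a cell from that cell itself: two
  evolutions from the same configuration that agree on cell j agree left of j.\<close>

lemma agree_left_of_cell:
  assumes evo_s: "evolution S fc fd c s" and evo_t: "evolution S fc fd c t"
    and agree: "\<And>k. s j k = t j k"
    and "i < j"
  shows "s i k = t i k"
  using \<open>i < j\<close>
proof (induction "start_time j i k" arbitrary: i k rule: less_induct)
  case less
  show ?case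
  proof (cases "k = 0")
    case True
    then show ?thesis using evolution_init[OF evo_s] evolution_init[OF evo_t] by simp
  next
    case False
    then have k1: "k \<ge> 1" by simp
    have left: "s (i - 1) ((k - 1) div 2) = t (i - 1) ((k - 1) div 2)"
      using less.hyps[OF start_time_left_earlier[OF less.prems k1]] less.prems by simp
    have self: "s i (k - 1) = t i (k - 1)"
      using less.hyps[OF start_time_self_earlier[OF k1]] less.prems by simp
    have right: "s (i + 1) (2 * k - 1) = t (i + 1) (2 * k - 1)"
    proof (cases "i + 1 = j")
      case True
      then show ?thesis using agree by simp
    next
      case False
      then have "i + 1 < j" using less.prems by simp
      then show ?thesis using less.hyps[OF start_time_right_earlier[OF _ k1]] by simp
    qed
    show ?thesis
      using evolution_step[OF evo_s k1, of i] evolution_step[OF evo_t k1, of i]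
        left self right by simp
  qed
qed

theorem mainTheorem3:
  fixes S :: "'a set" and fc fd :: "'a \<Rightarrow> 'a \<Rightarrow> 'a \<Rightarrow> 'a"
    and q :: 'a and c :: "int \<Rightarrow> 'a" and j :: int
  assumes "ssca S fc fd"
    and "q \<in> S"
    and "\<forall>x\<in>S. \<forall>z\<in>S. fc x q z = q \<and> fd x q z = q"
    and "\<forall>i. c i \<in> S"
    and "c j = q"
  shows "(\<forall>s. evolution S fc fd c s \<longrightarrow> (\<forall>k. s j k = q)) \<and>
         (\<forall>s t i k. evolution S fc fd c s \<longrightarrow> evolution S fc fd c t \<longrightarrow> i < j
              \<longrightarrow> s i k = t i k)"
proof (intro conjI allI impI)
  fix s k
  assume "evolution S fc fd c s"
  then show "s j k = q" using assms(3,5) by (rule absorbing_cell_constant)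
next
  fix s t i k
  assume evo_s: "evolution S fc fd c s" and evo_t: "evolution S fc fd c t" and "i < j"
  have "\<And>k. s j k = t j k"
    using absorbing_cell_constant[OF evo_s assms(3,5)] absorbing_cell_constant[OF evo_t assms(3,5)]
    by simp
  then show "s i k = t i k" using agree_left_of_cell[OF evo_s evo_t] \<open>i < j\<close> by blast
qed

end
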